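(* Assume CH. There exists a set $A\subseteq\mathbb{R}^2$ which is a Hamel basis of $\mathbb{R}^2$ over $\mathbb{Q}$ and such that for every straight line $l\subseteq\mathbb{R}^2$ and every isometry $T:\mathbb{R}\to l$ onto $l$, the set $T^{-1}(A\cap l)$ is a strong Sierpiński subset of $\mathbb{R}$.
   Context: A Sierpiński set is $S\subseteq\mathbb{R}$ with $|S|=\mathfrak{c}$ such that $S\cap N$ is countable for every Lebesgue-null $N\subseteq\mathbb{R}$; it is strong Sierpiński if moreover $S\cap B$ is uncountable for every Borel $B\subseteq\mathbb{R}$ of positive Lebesgue measure. A Hamel basis of $\mathbb{R}^2$ is a basis over $\mathbb{Q}$. *)

theory Defs
  imports "HOL-Analysis.Analysis" "HOL-Library.Equipollence"
begin

definition CH :: bool where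
  "CH \<longleftrightarrow> (\<forall>S :: real set. uncountable S \<longrightarrow> S \<approx> (UNIV :: real set))"

definition qscale :: "rat \<Rightarrow> real \<times> real \<Rightarrow> real \<times> real" where
  "qscale q x = of_rat q *\<^sub>R x"

definition hamel_basis_R2 :: "(real \<times> real) set \<Rightarrow> bool" where
  "hamel_basis_R2 A \<longleftrightarrow> \<not> module.dependent qscale A \<and> module.span qscale A = UNIV"

definition sierpinski_set :: "real set \<Rightarrow> bool" where
  "sierpinski_set S \<longleftrightarrow> S \<approx> (UNIV :: real set) \<and>
     (\<forall>N \<in> null_sets lebesgue. countable (S \<inter> N))"

definition strong_sierpinski_set :: "real set \<Rightarrow> bool" where
  "strong_sierpinski_set S \<longleftrightarrow> sierpinski_set S \<and>
     (\<forall>B \<in> sets borel. emeasure lborel B > 0 \<longrightarrow> uncountable (S \<inter> B))"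

definition is_line :: "(real \<times> real) set \<Rightarrow> bool" where
  "is_line l \<longleftrightarrow> (\<exists>p v. v \<noteq> 0 \<and> l = {p + t *\<^sub>R v | t. True})"

definition isometry_onto :: "(real \<Rightarrow> real \<times> real) \<Rightarrow> (real \<times> real) set \<Rightarrow> bool" where
  "isometry_onto T l \<longleftrightarrow> (\<forall>x y. dist (T x) (T y) = dist x y) \<and> range T = l"

end

theory Submission
  imports Defs
begin

(*
  Under CH, well-order the continuum so that every initial segment is countable and run a
  transfinite construction along it. The tasks are: every point x of the plane; a family of
  null sets on lines which is cofinal among all null subsets of lines; and every closed set of
  positive measure on a line, each scheduled uncountably often. There are only continuum many
  tasks because open (hence closed and G-delta) sets are coded by sets of naturals.
  At stage i we add a point of the positive set of task i outside the span of what was built so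
  far, and, if x is not yet in the span, a generic a together with x - a. All points added at
  stage i avoid the null sets of the countably many earlier tasks; this is possible because a
  countable union of null sets on lines is null in the plane, its reflections are null as well,
  and it meets every other line in a null set. The union A is a Hamel basis, it meets each
  null set on a line in a countable set (only points of earlier stages can lie in it), and it
  meets each positive closed set on a line in uncountably many points, one for each stage
  scheduled for it. Pulled back along an isometry onto a line, these are the two Sierpinski
  conditions, and CH turns "uncountable" into "of size continuum".
*)

unbundle cardinal_syntax

section \<open>Null sets and isometries\<close>

lemma countable_imp_negligible: "countable S \<Longrightarrow> negligible S"
  by (simp add: negligible_iff_null_sets countable_imp_null_set_lborel null_sets_completionI)

lemma negligible_lipschitz_image:
  fixes f :: "'m::euclidean_space \<Rightarrow> 'n::euclidean_space"
  assumes "DIM('m) \<le> DIM('n)" "negligible S" "C-lipschitz_on S f"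
  shows "negligible (f ` S)"
  using assms(1,2)
proof (rule negligible_locally_Lipschitz_image)
  fix x assume "x \<in> S"
  then show "\<exists>T B. open T \<and> x \<in> T \<and> (\<forall>y\<in>S \<inter> T. norm (f y - f x) \<le> B * norm (y - x))"
    using assms(3) by (intro exI[of _ UNIV] exI[of _ C]) (auto simp: lipschitz_on_def dist_norm)
qed

lemma negligible_isometric_image_iff:
  fixes f :: "'a::euclidean_space \<Rightarrow> 'a"
  assumes iso: "\<And>x y. dist (f x) (f y) = dist x y"
  shows "negligible (f ` S) \<longleftrightarrow> negligible S"
proof
  have "inj f" using iso by (metis dist_eq_0_iff injI)
  assume "negligible (f ` S)"
  moreover have "1-lipschitz_on (f ` S) (inv f)"
    using iso \<open>inj f\<close> by (intro lipschitz_onI) (auto simp: inv_f_f)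
  ultimately have "negligible (inv f ` f ` S)" by (rule negligible_lipschitz_image[rotated]) simp
  then show "negligible S" using \<open>inj f\<close> by (simp add: image_comp)
next
  assume "negligible S"
  then show "negligible (f ` S)"
    by (rule negligible_lipschitz_image[where C=1, rotated]) (auto intro: lipschitz_onI simp: iso)
qed

lemma negligible_borel_iff_emeasure0:
  fixes B :: "'a::euclidean_space set"
  assumes "B \<in> sets borel"
  shows "negligible B \<longleftrightarrow> emeasure lborel B = 0"
proof -
  have "B \<in> sets lebesgue" using assms by (simp only: sets_lborel[symmetric] sets_completionI_sets)
  then show ?thesis using assms by (simp add: negligible_iff_emeasure0)
qed

lemma non_negligible_contains_compact:
  fixes S :: "'a::euclidean_space set"
  assumes "S \<in> sets lebesgue" "\<not> negligible S"
  obtains K where "compact K" "K \<subseteq> S" "\<not> negligible K"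
proof -
  obtain C N where C: "fsigma C" "N \<in> null_sets lebesgue" "C \<union> N = S"
    using lebesgue_set_almost_fsigma[OF assms(1)] by metis
  obtain F :: "nat \<Rightarrow> 'a set" where F: "range F \<subseteq> Collect compact" "C = \<Union>(range F)"
    using C(1) fsigma_Union_compact by metis
  have "\<not> negligible C"
    using C(2,3) assms(2) by (metis negligible_Un negligible_iff_null_sets)
  then obtain n where "\<not> negligible (F n)"
    using F(2) by (metis negligible_Union_nat)
  then show thesis using F C(3) by (intro that[of "F n"]) auto
qed

lemma negligible_imp_subset_open_Inter:
  fixes N :: "'a::euclidean_space set"
  assumes "negligible N"
  obtains U :: "nat \<Rightarrow> 'a set" where "\<And>m. open (U m)" "N \<subseteq> \<Inter>(range U)" "negligible (\<Inter>(range U))"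
proof -
  have "\<exists>U. open U \<and> N \<subseteq> U \<and> U \<in> lmeasurable \<and> measure lebesgue U < 1 / Suc m" for m
  proof -
    obtain U where U: "open U" "N \<subseteq> U" "U - N \<in> lmeasurable" "emeasure lebesgue (U - N) < 1 / Suc m"
      using sets_lebesgue_outer_open[OF negligible_imp_sets[OF assms], of "1 / Suc m"] by auto
    have U_eq: "U = (U - N) \<union> N" using U(2) by auto
    have "U \<in> lmeasurable"
      using U(3) assms U_eq by (metis fmeasurable.Un negligible_imp_measurable)
    moreover have "measure lebesgue U \<le> measure lebesgue (U - N)"
      using measure_Un_le[of "U - N" lebesgue N] U(3) assms U_eq
      by (metis add.right_neutral fmeasurableD negligible_imp_measurable negligible_imp_measure0)
    moreover have "measure lebesgue (U - N) < 1 / Suc m"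
      using U(3,4) by (simp add: emeasure_eq_measure2 ennreal_less_iff)
    ultimately show ?thesis using U(1,2) by auto
  qed
  then obtain U where U: "\<And>m. open (U m)" "\<And>m. N \<subseteq> U m" "\<And>m. U m \<in> lmeasurable"
      "\<And>m. measure lebesgue (U m) < 1 / Suc m"
    by metis
  have "negligible (\<Inter>(range U))"
    unfolding negligible_outer
  proof (intro allI impI)
    fix e :: real assume "e > 0"
    then obtain m where "1 / Suc m < e" using nat_approx_posE by blast
    then show "\<exists>T. \<Inter>(range U) \<subseteq> T \<and> T \<in> lmeasurable \<and> measure lebesgue T < e"
      using U(3,4)[of m] by (intro exI[of _ "U m"]) auto
  qed
  with U(1,2) show thesis by (intro that) auto
qed

section \<open>Counting and coding\<close>

lemma CH_imp_well_order_countable_underS: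
  assumes "CH"
  obtains r :: "real rel" where "Well_order r" "Field r = UNIV" "\<And>a. countable (underS r a)"
proof
  let ?r = "|UNIV :: real set|"
  show "Well_order ?r" by (rule card_of_Well_order)
  show "Field ?r = UNIV" by (rule Field_card_of)
  fix a
  show "countable (underS ?r a)"
  proof (rule ccontr)
    assume "uncountable (underS ?r a)"
    then have "|underS ?r a| =o ?r"
      using assms by (simp add: CH_def eqpoll_iff_card_of_ordIso)
    moreover have "|underS ?r a| <o ?r"
      by (rule card_of_underS[OF card_of_Card_order]) (simp add: Field_card_of)
    ultimately show False using not_ordLess_ordIso by blast
  qed
qed

lemma surj_real_prod:
  fixes f :: "real \<Rightarrow> 'a" and g :: "real \<Rightarrow> 'b"
  assumes "surj f" "surj g"
  obtains h :: "real \<Rightarrow> 'a \<times> 'b" where "surj h"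
proof -
  obtain s :: "real \<Rightarrow> real \<times> real" where "bij s"
    using card_of_ordIso ordIso_symmetric[OF card_of_Times_same_infinite[OF infinite_UNIV_char_0]]
    by (metis UNIV_Times_UNIV)
  then have "surj (map_prod f g \<circ> s)"
    using assms by (metis bij_is_surj comp_surj map_prod_surj)
  then show thesis by (rule that)
qed

lemma surj_real_nat_set: obtains f :: "real \<Rightarrow> nat set" where "surj f"
  using nat_sets_eqpoll_reals by (metis eqpoll_def bij_betw_inv bij_betw_imp_surj)

lemma uncountable_vimage_surj: "surj f \<Longrightarrow> uncountable A \<Longrightarrow> uncountable (f -` A)"
  by (metis countable_image surj_image_vimage_eq)

lemma open_sets_coded:
  obtains code :: "nat set \<Rightarrow> 'a::second_countable_topology set" where "range code = Collect open"
proof -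
  obtain B :: "'a set set" where B: "countable B" "topological_basis B"
    using ex_countable_basis by blast
  let ?code = "\<lambda>S. \<Union>{b \<in> B. to_nat_on B b \<in> S}"
  have "range ?code = Collect open"
  proof (intro equalityI subsetI)
    fix U assume "U \<in> range ?code"
    then show "U \<in> Collect open" using B(2) by (auto intro: topological_basis_open)
  next
    fix U :: "'a set" assume "U \<in> Collect open"
    then obtain B' where "B' \<subseteq> B" "\<Union>B' = U" using B(2) by (auto simp: topological_basis_def)
    moreover have "{b \<in> B. to_nat_on B b \<in> to_nat_on B ` B'} = B'"
      using \<open>B' \<subseteq> B\<close> inj_on_to_nat_on[OF B(1)] by (auto simp: inj_on_eq_iff)
    ultimately have "U = ?code (to_nat_on B ` B')" by simp
    then show "U \<in> range ?code" by blast
  qed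
  then show thesis by (rule that)
qed

lemma closed_sets_coded:
  obtains C :: "nat set \<Rightarrow> 'a::second_countable_topology set" where "range C = Collect closed"
proof -
  obtain code :: "nat set \<Rightarrow> 'a set" where code: "range code = Collect open"
    using open_sets_coded by blast
  have "uminus ` Collect open = Collect (closed :: 'a set \<Rightarrow> bool)"
  proof (intro equalityI subsetI)
    fix K :: "'a set" assume "K \<in> Collect closed"
    then have "- K \<in> Collect open" by (simp add: open_Compl)
    then show "K \<in> uminus ` Collect open" by (rule rev_image_eqI) simp
  qed auto
  then have "range (uminus \<circ> code) = Collect closed" by (simp only: image_comp[symmetric] code)
  then show thesis by (rule that)
qed

lemma negligible_sets_coded:
  obtains G :: "nat set \<Rightarrow> 'a::euclidean_space set"
  where "\<And>S. negligible (G S)" "\<And>N. negligible N \<Longrightarrow> \<exists>S. N \<subseteq> G S"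
proof -
  obtain code :: "nat set \<Rightarrow> 'a set" where code: "range code = Collect open"
    using open_sets_coded by blast
  let ?gd = "\<lambda>S. \<Inter>m. code {n. prod_encode (m, n) \<in> S}"
  let ?G = "\<lambda>S. if negligible (?gd S) then ?gd S else {}"
  have "negligible (?G S)" for S by simp
  moreover have "\<exists>S. N \<subseteq> ?G S" if N: "negligible N" for N
  proof -
    obtain U :: "nat \<Rightarrow> 'a set" where U: "\<And>m. open (U m)" "N \<subseteq> \<Inter>(range U)" "negligible (\<Inter>(range U))"
      using negligible_imp_subset_open_Inter[OF N] by blast
    have "U m \<in> range code" for m using U(1) code by blast
    then have c: "code (inv code (U m)) = U m" for m by (rule f_inv_into_f)
    define S where "S = {prod_encode (m, n) | m n. n \<in> inv code (U m)}"
    have "{n. prod_encode (m, n) \<in> S} = inv code (U m)" for m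
      by (auto simp: S_def dest: inj_prod_encode[THEN injD])
    then have "?gd S = \<Inter>(range U)" by (simp add: c)
    then show ?thesis using U(2,3) by (intro exI[of _ S]) simp
  qed
  ultimately show thesis by (rule that)
qed

section \<open>Lines in the plane\<close>

text \<open>Normalised to unit speed, so that it maps the real line isometrically onto the line.\<close>

definition line_param :: "real \<times> real \<Rightarrow> real \<times> real \<Rightarrow> real \<Rightarrow> real \<times> real" where
  "line_param p v t = p + (t / norm v) *\<^sub>R v"

definition line_coord :: "real \<times> real \<Rightarrow> real \<times> real \<Rightarrow> real \<times> real \<Rightarrow> real" where
  "line_coord p v y = ((y - p) \<bullet> v) / norm v"

lemma line_coord_line_param: "v \<noteq> 0 \<Longrightarrow> line_coord p v (line_param p v t) = t"
  by (simp add: line_param_def line_coord_def power2_norm_eq_inner[symmetric] power2_eq_square)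

lemma dist_line_param: "v \<noteq> 0 \<Longrightarrow> dist (line_param p v s) (line_param p v t) = dist s t"
proof -
  assume "v \<noteq> 0"
  have "line_param p v s - line_param p v t = ((s - t) / norm v) *\<^sub>R v"
    by (simp add: line_param_def algebra_simps diff_divide_distrib)
  then show ?thesis using \<open>v \<noteq> 0\<close> by (simp add: dist_norm dist_real_def)
qed

lemma lipschitz_line_coord: "1-lipschitz_on S (line_coord p v)"
proof (rule lipschitz_onI)
  fix x y assume "x \<in> S" "y \<in> S"
  have "line_coord p v x - line_coord p v y = ((x - y) \<bullet> v) / norm v"
    by (simp add: line_coord_def inner_diff_left diff_divide_distrib)
  also have "\<bar>\<dots>\<bar> \<le> norm (x - y)"
    using Cauchy_Schwarz_ineq2[of "x - y" v]
    by (cases "v = 0") (simp_all add: abs_divide divide_le_eq)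
  finally show "dist (line_coord p v x) (line_coord p v y) \<le> 1 * dist x y"
    by (simp add: dist_norm dist_real_def)
qed simp

lemma range_line_param: "v \<noteq> 0 \<Longrightarrow> range (line_param p v) = {p + t *\<^sub>R v | t. True}"
  unfolding line_param_def
  by (auto intro!: image_eqI[where x = "t * norm v" for t])

lemma negligible_range_line_param: "v \<noteq> 0 \<Longrightarrow> negligible (range (line_param p v))"
proof -
  assume "v \<noteq> 0"
  obtain a b where v: "v = (a, b)" by fastforce
  let ?w = "(- b, a)"
  have "?w \<noteq> 0" using \<open>v \<noteq> 0\<close> v by (auto simp: zero_prod_def)
  moreover have "range (line_param p v) \<subseteq> {x. ?w \<bullet> x = ?w \<bullet> p}"
    by (auto simp: line_param_def v inner_add_right algebra_simps)
  ultimately show ?thesis using negligible_hyperplane[of ?w "?w \<bullet> p"] negligible_subset by blast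
qed

lemma negligible_line_param_vimage_image:
  assumes "v \<noteq> 0" "v' \<noteq> 0" "negligible N"
  shows "negligible (line_param p v -` line_param p' v' ` N)"
proof -
  let ?f = "line_coord p v \<circ> line_param p' v'"
  have "dist (?f s) (?f t) \<le> dist s t" for s t
  proof -
    have "dist (?f s) (?f t) \<le> 1 * dist (line_param p' v' s) (line_param p' v' t)"
      using lipschitz_onD[OF lipschitz_line_coord[of UNIV p v]] by simp
    then show ?thesis by (simp add: dist_line_param[OF assms(2)])
  qed
  then have "1-lipschitz_on N ?f" by (intro lipschitz_onI) simp_all
  then have "negligible (?f ` N)" using negligible_lipschitz_image[OF _ assms(3)] by simp
  moreover have "line_param p v -` line_param p' v' ` N \<subseteq> ?f ` N"
  proof
    fix t assume "t \<in> line_param p v -` line_param p' v' ` N"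
    then obtain s where "s \<in> N" "line_param p v t = line_param p' v' s" by auto
    then show "t \<in> ?f ` N" using line_coord_line_param[OF assms(1), of p t] by (metis comp_apply image_eqI)
  qed
  ultimately show ?thesis by (rule negligible_subset)
qed

definition line_null :: "(real \<times> real) set \<Rightarrow> bool" where
  "line_null Z \<longleftrightarrow> (\<exists>p v N. v \<noteq> 0 \<and> negligible N \<and> Z = line_param p v ` N)"

definition line_positive :: "(real \<times> real) set \<Rightarrow> bool" where
  "line_positive P \<longleftrightarrow> (\<exists>p v K. v \<noteq> 0 \<and> \<not> negligible K \<and> P = line_param p v ` K)"

lemma line_null_empty: "line_null {}"
  unfolding line_null_def by (intro exI[of _ 0] exI[of _ "(1, 0)"] exI[of _ "{}"]) (simp add: zero_prod_def)

lemma line_positive_range_line_param: "v \<noteq> 0 \<Longrightarrow> line_positive (range (line_param p v))"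
  unfolding line_positive_def by (intro exI[of _ p] exI[of _ v] exI[of _ UNIV]) simp

lemma negligible_line_null: "line_null Z \<Longrightarrow> negligible Z"
  unfolding line_null_def by (auto intro: negligible_subset[OF negligible_range_line_param])

lemma negligible_line_param_vimage_line_null:
  "v \<noteq> 0 \<Longrightarrow> line_null Z \<Longrightarrow> negligible (line_param p v -` Z)"
  unfolding line_null_def by (auto intro: negligible_line_param_vimage_image)

lemma line_positive_avoiding:
  assumes "line_positive P" "countable X" "countable \<Z>" "\<And>Z. Z \<in> \<Z> \<Longrightarrow> line_null Z"
  obtains b where "b \<in> P" "b \<notin> X" "b \<notin> \<Union>\<Z>"
proof -
  obtain p v K where pvK: "v \<noteq> 0" "\<not> negligible K" "P = line_param p v ` K"
    using assms(1) by (auto simp: line_positive_def)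
  have "line_param p v -` X \<subseteq> line_coord p v ` X"
    using line_coord_line_param[OF pvK(1)] by (metis image_eqI subsetI vimageE)
  then have "negligible (line_param p v -` X)"
    using assms(2) countable_imp_negligible countable_subset by blast
  moreover have "negligible (line_param p v -` \<Union>\<Z>)"
    unfolding vimage_Union using assms(3,4) negligible_line_param_vimage_line_null[OF pvK(1), where p = p]
    by (intro negligible_countable_Union) auto
  ultimately have "\<not> K \<subseteq> line_param p v -` X \<union> line_param p v -` \<Union>\<Z>"
    using pvK(2) by (metis negligible_Un_eq negligible_subset)
  then show thesis using pvK(3) that by blast
qed

lemma split_avoiding:
  fixes x :: "real \<times> real"
  assumes "countable X" "countable \<Z>" "\<And>Z. Z \<in> \<Z> \<Longrightarrow> line_null Z"
  obtains a where "a \<notin> X" "a \<notin> \<Union>\<Z>" "x - a \<notin> \<Union>\<Z>"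
proof -
  have null: "negligible (\<Union>\<Z>)"
    using assms(2,3) negligible_line_null by (intro negligible_countable_Union) auto
  have "1-lipschitz_on (\<Union>\<Z>) (\<lambda>w. x - w)"
    by (rule lipschitz_onI) (simp_all add: dist_norm norm_minus_commute)
  from negligible_lipschitz_image[OF _ null this]
  have "negligible ((\<lambda>w. x - w) ` \<Union>\<Z>)" by simp
  then have "negligible (X \<union> \<Union>\<Z> \<union> (\<lambda>w. x - w) ` \<Union>\<Z>)"
    using null assms(1) by (simp add: countable_imp_negligible)
  then obtain a where "a \<notin> X \<union> \<Union>\<Z> \<union> (\<lambda>w. x - w) ` \<Union>\<Z>"
    by (metis UNIV_eq_I non_negligible_UNIV)
  moreover have "x - a \<in> \<Union>\<Z> \<Longrightarrow> a \<in> (\<lambda>w. x - w) ` \<Union>\<Z>"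
    by (rule image_eqI[of _ _ "x - a"]) simp_all
  ultimately show thesis using that by blast
qed

lemma isometry_onto_line_factors:
  assumes "is_line l" "isometry_onto T l"
  obtains p v \<sigma> where "v \<noteq> 0" "\<And>x y. dist (\<sigma> x) (\<sigma> y) = dist x y" "T = line_param p v \<circ> \<sigma>"
proof -
  obtain p v where v: "v \<noteq> 0" and l: "range (line_param p v) = l"
    using assms(1) range_line_param by (auto simp: is_line_def)
  have dT: "dist (T x) (T y) = dist x y" and rT: "range T = l" for x y
    using assms(2) by (auto simp: isometry_onto_def)
  let ?\<sigma> = "line_coord p v \<circ> T"
  have T_eq: "T = line_param p v \<circ> ?\<sigma>"
  proof
    fix t
    obtain s where "T t = line_param p v s" using rT l by (metis rangeE rangeI)
    then show "T t = (line_param p v \<circ> ?\<sigma>) t" using v by (simp add: line_coord_line_param)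
  qed
  have "dist (?\<sigma> x) (?\<sigma> y) = dist x y" for x y
    using T_eq dist_line_param[OF v] dT by (metis comp_apply)
  then show thesis using that[OF v _ T_eq] by blast
qed

section \<open>The transfinite construction\<close>

interpretation Q: vector_space qscale
  by unfold_locales (simp_all add: qscale_def of_rat_add of_rat_mult scaleR_add_right scaleR_add_left)

lemma countable_Q_span:
  assumes "countable X" shows "countable (Q.span X)"
proof -
  let ?comb = "\<lambda>xs. \<Sum>(q, a)\<leftarrow>xs. qscale q a"
  have "Q.span X \<subseteq> ?comb ` lists (UNIV \<times> X)"
  proof
    fix y assume "y \<in> Q.span X"
    then obtain t c where t: "finite t" "t \<subseteq> X" "y = (\<Sum>a\<in>t. qscale (c a) a)"
      unfolding Q.span_explicit by blast
    obtain xs where xs: "set xs = t" "distinct xs" using finite_distinct_list[OF t(1)] by blast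
    have "y = ?comb (map (\<lambda>a. (c a, a)) xs)"
      using t(3) xs by (simp add: sum_list_distinct_conv_sum_set comp_def)
    moreover have "map (\<lambda>a. (c a, a)) xs \<in> lists (UNIV \<times> X)" using xs t(2) by auto
    ultimately show "y \<in> ?comb ` lists (UNIV \<times> X)" by blast
  qed
  moreover have "countable ((UNIV :: rat set) \<times> X)" using assms by (intro countable_SIGMA) auto
  then have "countable (lists ((UNIV :: rat set) \<times> X))" by (rule countable_lists)
  ultimately show ?thesis by (metis countable_image countable_subset)
qed

locale hamel_schedule =
  fixes r :: "'i rel" and pt :: "'i \<Rightarrow> real \<times> real" and Z P :: "'i \<Rightarrow> (real \<times> real) set"
  assumes well_order: "Well_order r" and field: "Field r = UNIV"
    and countable_underS: "\<And>i. countable (underS r i)"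
    and surj_pt: "surj pt"
    and line_null_Z: "\<And>i. line_null (Z i)"
    and Z_cover: "\<And>p v N. v \<noteq> 0 \<Longrightarrow> negligible N \<Longrightarrow> \<exists>i. line_param p v ` N \<subseteq> Z i"
    and line_positive_P: "\<And>i. line_positive (P i)"
    and P_recurrent: "\<And>p v K. v \<noteq> 0 \<Longrightarrow> closed K \<Longrightarrow> \<not> negligible K \<Longrightarrow>
                          uncountable {i. P i = line_param p v ` K}"
begin

definition avoid :: "'i \<Rightarrow> (real \<times> real) set" where
  "avoid i = \<Union>(Z ` underS r i)"

definition new_point :: "'i \<Rightarrow> (real \<times> real) set \<Rightarrow> real \<times> real" where
  "new_point i X = (SOME b. b \<in> P i \<and> b \<notin> Q.span X \<and> b \<notin> avoid i)"

definition split_point :: "'i \<Rightarrow> (real \<times> real) set \<Rightarrow> real \<times> real" where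
  "split_point i X = (SOME a. a \<notin> Q.span (insert (pt i) X) \<and> a \<notin> avoid i \<and> pt i - a \<notin> avoid i)"

text \<open>
  The point \<open>b\<close> makes the basis meet \<open>P i\<close>; the pair \<open>a\<close>, \<open>pt i - a\<close> puts \<open>pt i\<close> into the span
  without creating a dependence, since \<open>a\<close> is chosen outside the span of \<open>pt i\<close> and the rest.
\<close>

definition stage :: "'i \<Rightarrow> (real \<times> real) set \<Rightarrow> (real \<times> real) set" where
  "stage i X = (let b = new_point i X; a = split_point i (insert b X) in
     if pt i \<in> Q.span (insert b X) then {b} else {b, a, pt i - a})"

definition block :: "'i \<Rightarrow> (real \<times> real) set" where
  "block = wfrec (r - Id) (\<lambda>g i. stage i (\<Union>(g ` underS r i)))"

definition before :: "'i \<Rightarrow> (real \<times> real) set" where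
  "before i = \<Union>(block ` underS r i)"

definition upto :: "'i \<Rightarrow> (real \<times> real) set" where
  "upto i = \<Union>(block ` under r i)"

definition basis :: "(real \<times> real) set" where
  "basis = \<Union>(range block)"

lemma wo_rel: "wo_rel r"
  using well_order by (simp add: wo_rel_def)

lemma trans_r: "trans r" and antisym_r: "antisym r"
  using wo_rel.TRANS[OF wo_rel] wo_rel.ANTISYM[OF wo_rel] by simp_all

lemma total_r: "(i, j) \<in> r \<or> (j, i) \<in> r"
  using wo_rel.TOTALS[OF wo_rel] field by simp

lemma under_eq: "under r i = insert i (underS r i)"
  using Refl_under_underS[OF wo_rel.REFL[OF wo_rel]] field by simp

lemma block_eq: "block i = stage i (before i)"
proof -
  have wf: "wf (r - Id)" using wo_rel.WF[OF wo_rel] .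
  have "block i = stage i (\<Union>j\<in>underS r i. cut block (r - Id) i j)"
    unfolding block_def by (subst wfrec[OF wf]) simp
  also have "(\<Union>j\<in>underS r i. cut block (r - Id) i j) = before i"
    unfolding before_def by (intro SUP_cong refl) (simp add: cut_apply underS_def)
  finally show ?thesis .
qed

lemma finite_block: "finite (block i)"
  by (simp add: block_eq stage_def Let_def)

lemma countable_before: "countable (before i)"
  unfolding before_def using countable_underS finite_block
  by (intro countable_UN) (auto intro: countable_finite)

lemma avoid_family: "countable (Z ` underS r i)" "Y \<in> Z ` underS r i \<Longrightarrow> line_null Y"
  using countable_underS line_null_Z by auto

lemma new_point_spec:
  assumes "countable X"
  shows "new_point i X \<in> P i" "new_point i X \<notin> Q.span X" "new_point i X \<notin> avoid i"
proof -
  obtain b where "b \<in> P i" "b \<notin> Q.span X" "b \<notin> avoid i"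
    using line_positive_avoiding[OF line_positive_P countable_Q_span[OF assms] avoid_family[where i = i]]
    unfolding avoid_def by blast
  then have "\<exists>b. b \<in> P i \<and> b \<notin> Q.span X \<and> b \<notin> avoid i" by blast
  from someI_ex[OF this] show "new_point i X \<in> P i" "new_point i X \<notin> Q.span X" "new_point i X \<notin> avoid i"
    unfolding new_point_def by blast+
qed

lemma split_point_spec:
  assumes "countable X"
  shows "split_point i X \<notin> Q.span (insert (pt i) X)" "split_point i X \<notin> avoid i"
    "pt i - split_point i X \<notin> avoid i"
proof -
  obtain a where "a \<notin> Q.span (insert (pt i) X)" "a \<notin> avoid i" "pt i - a \<notin> avoid i"
    using split_avoiding[OF countable_Q_span avoid_family[where i = i]] assms
    unfolding avoid_def by (metis countable_insert)
  then have "\<exists>a. a \<notin> Q.span (insert (pt i) X) \<and> a \<notin> avoid i \<and> pt i - a \<notin> avoid i" by blast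
  from someI_ex[OF this] show "split_point i X \<notin> Q.span (insert (pt i) X)" "split_point i X \<notin> avoid i"
    "pt i - split_point i X \<notin> avoid i"
    unfolding split_point_def by blast+
qed

lemma new_point_in_stage: "new_point i X \<in> stage i X"
  by (simp add: stage_def Let_def)

lemma new_point_in_block: "new_point i (before i) \<in> block i"
  by (simp add: block_eq new_point_in_stage)

lemma stage_disjoint_avoid:
  assumes "countable X" shows "stage i X \<inter> avoid i = {}"
  using new_point_spec[OF assms] split_point_spec[of "insert (new_point i X) X"] assms
  by (auto simp: stage_def Let_def)

lemma pt_in_span_stage: "pt i \<in> Q.span (X \<union> stage i X)"
proof (cases "pt i \<in> Q.span (insert (new_point i X) X)")
  case True
  then show ?thesis
    using Q.span_mono[of "insert (new_point i X) X" "X \<union> stage i X"] by (auto simp: stage_def Let_def)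
next
  case False
  let ?a = "split_point i (insert (new_point i X) X)"
  have "?a + (pt i - ?a) \<in> Q.span (X \<union> stage i X)"
    using False by (intro Q.span_add Q.span_base) (auto simp: stage_def Let_def)
  then show ?thesis by simp
qed

lemma independent_stage:
  assumes "countable X" "Q.independent X"
  shows "Q.independent (X \<union> stage i X)"
proof -
  let ?b = "new_point i X" and ?x = "pt i"
  let ?X = "insert ?b X"
  have indep_X: "Q.independent ?X"
    using Q.independent_insertI new_point_spec(2)[OF assms(1)] assms(2) by blast
  show ?thesis
  proof (cases "?x \<in> Q.span ?X")
    case True
    then show ?thesis using indep_X by (simp add: stage_def Let_def)
  next
    case False
    let ?a = "split_point i ?X"
    have a: "?a \<notin> Q.span (insert ?x ?X)" using split_point_spec(1) assms(1) by blast
    then have indep_aX: "Q.independent (insert ?a ?X)"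
      using Q.independent_insertI[OF _ indep_X] Q.span_mono[of ?X "insert ?x ?X"] by blast
    have "?x - ?a \<notin> Q.span (insert ?a ?X)"
    proof
      assume "?x - ?a \<in> Q.span (insert ?a ?X)"
      then have "(?x - ?a) + ?a \<in> Q.span (insert ?a ?X)"
        by (rule Q.span_add[OF _ Q.span_base]) simp
      then have "?a \<in> Q.span (insert ?x ?X)" using Q.in_span_insert False by simp
      with a show False ..
    qed
    then have "Q.independent (insert (?x - ?a) (insert ?a ?X))"
      using Q.independent_insertI[OF _ indep_aX] by blast
    moreover have "X \<union> stage i X = insert (?x - ?a) (insert ?a ?X)"
      using False by (auto simp: stage_def Let_def)
    ultimately show ?thesis by simp
  qed
qed

lemma upto_eq: "upto i = before i \<union> block i"
  by (auto simp: upto_def before_def under_eq)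

lemma upto_mono: "(j, i) \<in> r \<Longrightarrow> upto j \<subseteq> upto i"
  unfolding upto_def using under_incr[OF trans_r] by blast

lemma upto_chain: "upto i \<subseteq> upto j \<or> upto j \<subseteq> upto i"
  using total_r upto_mono by blast

lemma before_eq_Union_upto: "before i = \<Union>(upto ` underS r i)"
proof
  show "before i \<subseteq> \<Union>(upto ` underS r i)" by (auto simp: before_def upto_eq)
  have "upto j \<subseteq> before i" if "j \<in> underS r i" for j
    using that underS_incr[OF trans_r antisym_r, of j i] by (auto simp: upto_eq before_def underS_def)
  then show "\<Union>(upto ` underS r i) \<subseteq> before i" by blast
qed

lemma countable_upto: "countable (upto i)"
  by (simp add: upto_eq countable_before finite_block countable_finite)

lemma independent_upto: "Q.independent (upto i)"
proof (induction i rule: wf_induct[OF wo_rel.WF[OF wo_rel]])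
  case (1 i)
  have "Q.independent (before i)"
    unfolding before_eq_Union_upto using upto_chain 1
    by (intro Q.independent_Union_directed) (auto simp: underS_def)
  then show ?case
    using independent_stage[OF countable_before] by (simp add: upto_eq block_eq)
qed

lemma basis_eq: "basis = \<Union>(range upto)"
  by (auto simp: basis_def upto_def under_eq)

lemma independent_basis: "Q.independent basis"
  unfolding basis_eq using upto_chain independent_upto
  by (intro Q.independent_Union_directed) auto

lemma span_basis: "Q.span basis = UNIV"
proof -
  have "pt i \<in> Q.span basis" for i
    using pt_in_span_stage[of i "before i"] Q.span_mono[of "upto i" basis]
    by (auto simp: upto_eq block_eq basis_eq)
  then show ?thesis using surj_pt by (metis UNIV_eq_I surjD)
qed

lemma countable_basis_Int_Z: "countable (basis \<inter> Z i)"
proof -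
  have "basis \<inter> Z i \<subseteq> upto i"
  proof
    fix y assume y: "y \<in> basis \<inter> Z i"
    then obtain k where k: "y \<in> block k" by (auto simp: basis_def)
    show "y \<in> upto i"
    proof (cases "(k, i) \<in> r")
      case True
      then show ?thesis using k by (auto simp: upto_def under_def)
    next
      case False
      then have "i \<in> underS r k" using total_r by (auto simp: underS_def)
      then have "y \<in> avoid k" using y by (auto simp: avoid_def)
      moreover have "y \<notin> avoid k"
        using k stage_disjoint_avoid[OF countable_before] by (auto simp: block_eq)
      ultimately show ?thesis by contradiction
    qed
  qed
  then show ?thesis using countable_upto by (rule countable_subset)
qed

lemma inj_new_point_before: "inj (\<lambda>i. new_point i (before i))"
proof (rule injI)
  have earlier: "new_point i (before i) \<noteq> new_point j (before j)" if "j \<in> underS r i" for i j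
  proof -
    have "new_point j (before j) \<in> before i"
      using that new_point_in_block unfolding before_def by blast
    then have "new_point j (before j) \<in> Q.span (before i)" by (rule Q.span_base)
    moreover have "new_point i (before i) \<notin> Q.span (before i)"
      by (rule new_point_spec(2)[OF countable_before])
    ultimately show ?thesis by auto
  qed
  fix i j assume "new_point i (before i) = new_point j (before j)"
  moreover have "i = j \<or> j \<in> underS r i \<or> i \<in> underS r j"
    using total_r by (auto simp: underS_def)
  ultimately show "i = j" using earlier by fastforce
qed

lemma uncountable_basis_Int_line:
  assumes "v \<noteq> 0" "closed K" "\<not> negligible K"
  shows "uncountable (basis \<inter> line_param p v ` K)"
proof
  let ?J = "{i. P i = line_param p v ` K}"
  let ?b = "\<lambda>i. new_point i (before i)"
  assume "countable (basis \<inter> line_param p v ` K)"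
  moreover have "?b ` ?J \<subseteq> basis \<inter> line_param p v ` K"
    using new_point_in_block new_point_spec(1)[OF countable_before] unfolding basis_def by blast
  ultimately have "countable (?b ` ?J)" by (rule countable_subset[rotated])
  then have "countable ?J" using inj_new_point_before countable_image_inj_on inj_on_subset by blast
  then show False using P_recurrent[OF assms] by contradiction
qed

lemma countable_basis_Int_line:
  "v \<noteq> 0 \<Longrightarrow> negligible N \<Longrightarrow> countable (basis \<inter> line_param p v ` N)"
  using Z_cover countable_basis_Int_Z countable_subset by (metis Int_mono order_refl)

lemma hamel_basis_R2_basis: "hamel_basis_R2 basis"
  unfolding hamel_basis_R2_def using independent_basis span_basis by simp

end

section \<open>Sierpinski sets on lines\<close>

lemma strong_sierpinski_line_preimage:
  assumes "CH" "is_line l" "isometry_onto T l"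
    and countable_null: "\<And>p v N. v \<noteq> 0 \<Longrightarrow> negligible N \<Longrightarrow> countable (A \<inter> line_param p v ` N)"
    and uncountable_positive: "\<And>p v K. v \<noteq> 0 \<Longrightarrow> compact K \<Longrightarrow> \<not> negligible K \<Longrightarrow>
                                  uncountable (A \<inter> line_param p v ` K)"
  shows "strong_sierpinski_set (T -` (A \<inter> l))"
proof -
  obtain p v \<sigma> where v: "v \<noteq> 0" and \<sigma>: "\<And>x y. dist (\<sigma> x) (\<sigma> y) = dist x y"
    and T: "T = line_param p v \<circ> \<sigma>"
    using isometry_onto_line_factors[OF assms(2,3)] by blast
  have T_image: "T ` S = line_param p v ` \<sigma> ` S" for S by (simp add: T image_comp)
  have "range T = l" using assms(3) by (simp add: isometry_onto_def)
  then have S_eq: "T -` (A \<inter> l) = T -` A" by blast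
  have "inj T"
  proof (rule injI)
    fix x y assume "T x = T y"
    moreover have "dist (T x) (T y) = dist x y" using dist_line_param[OF v] \<sigma> by (simp add: T)
    ultimately show "x = y" by simp
  qed
  have null: "countable (T -` A \<inter> N)" if "N \<in> null_sets lebesgue" for N
  proof -
    have "negligible (\<sigma> ` N)"
      using that negligible_isometric_image_iff[OF \<sigma>] by (simp add: negligible_iff_null_sets)
    then have "countable (A \<inter> T ` N)" unfolding T_image by (rule countable_null[OF v])
    then have "countable (T ` (T -` A \<inter> N))" by (rule countable_subset[rotated]) blast
    then show ?thesis using \<open>inj T\<close> by (metis countable_image_inj_on inj_on_subset subset_UNIV)
  qed
  have positive: "uncountable (T -` A \<inter> B)" if "B \<in> sets borel" "emeasure lborel B > 0" for B
  proof
    have "B \<in> sets lebesgue" using that(1) by (simp only: sets_lborel[symmetric] sets_completionI_sets)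
    moreover have "\<not> negligible B" using that negligible_borel_iff_emeasure0 by fastforce
    ultimately obtain K where K: "compact K" "K \<subseteq> B" "\<not> negligible K"
      by (rule non_negligible_contains_compact)
    have "1-lipschitz_on K \<sigma>" by (rule lipschitz_onI) (simp_all add: \<sigma>)
    then have "compact (\<sigma> ` K)"
      using K(1) compact_continuous_image lipschitz_on_continuous_on by blast
    moreover have "\<not> negligible (\<sigma> ` K)" using K(3) negligible_isometric_image_iff[OF \<sigma>] by simp
    ultimately have "uncountable (A \<inter> T ` K)"
      unfolding T_image by (rule uncountable_positive[OF v])
    moreover assume "countable (T -` A \<inter> B)"
    then have "countable (T ` (T -` A \<inter> B))" by simp
    moreover have "A \<inter> T ` K \<subseteq> T ` (T -` A \<inter> B)" using K(2) by blast
    ultimately show False by (metis countable_subset)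
  qed
  have "uncountable (T -` A)" using positive[of UNIV] by simp
  then have "T -` A \<approx> (UNIV :: real set)" using assms(1) by (simp add: CH_def)
  then show ?thesis
    unfolding S_eq strong_sierpinski_set_def sierpinski_set_def using null positive by blast
qed

text \<open>A line \<open>p + t v\<close> together with the code of a subset of its parameter space.\<close>

type_synonym coded_line_set = "((real \<times> real) \<times> (real \<times> real)) \<times> nat set"

lemma surj_real_onto_schedule_data:
  obtains s :: "real \<Rightarrow> (real \<times> real) \<times> coded_line_set \<times> coded_line_set \<times> real"
  where "surj s"
proof -
  obtain s2 :: "real \<Rightarrow> real \<times> real" where s2: "surj s2"
    using surj_real_prod[OF surj_id surj_id] by blast
  obtain s4 :: "real \<Rightarrow> (real \<times> real) \<times> (real \<times> real)" where s4: "surj s4"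
    using surj_real_prod[OF s2 s2] by blast
  obtain sn :: "real \<Rightarrow> nat set" where sn: "surj sn"
    using surj_real_nat_set by blast
  obtain sc :: "real \<Rightarrow> coded_line_set" where sc: "surj sc"
    using surj_real_prod[OF s4 sn] by blast
  obtain s1 :: "real \<Rightarrow> coded_line_set \<times> real" where s1: "surj s1"
    using surj_real_prod[OF sc surj_id] by blast
  obtain s0 :: "real \<Rightarrow> coded_line_set \<times> coded_line_set \<times> real" where s0: "surj s0"
    using surj_real_prod[OF sc s1] by blast
  show thesis using surj_real_prod[OF s2 s0] that by blast
qed

lemma hamel_schedule_exists:
  assumes "CH"
  obtains r :: "real rel" and pt Z P where "hamel_schedule r pt Z P"
proof -
  obtain r :: "real rel" where r: "Well_order r" "Field r = UNIV" "\<And>a. countable (underS r a)"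
    using CH_imp_well_order_countable_underS[OF assms] by blast
  obtain G :: "nat set \<Rightarrow> real set" where G: "\<And>S. negligible (G S)" "\<And>N. negligible N \<Longrightarrow> \<exists>S. N \<subseteq> G S"
    using negligible_sets_coded by blast
  obtain C :: "nat set \<Rightarrow> real set" where C: "range C = Collect closed"
    using closed_sets_coded by blast
  obtain s :: "real \<Rightarrow> (real \<times> real) \<times> coded_line_set \<times> coded_line_set \<times> real"
    where s: "surj s"
    by (rule surj_real_onto_schedule_data)
  define Z where "Z i = (case fst (snd (s i)) of ((p, v), S) \<Rightarrow>
    if v = 0 then {} else line_param p v ` G S)" for i
  \<comment> \<open>Indices whose code is not a positive closed set on a line get a whole line as filler task.\<close>
  define P where "P i = (case fst (snd (snd (s i))) of ((p, v), S) \<Rightarrow>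
    if v \<noteq> 0 \<and> \<not> negligible (C S) then line_param p v ` C S else range (line_param 0 (1, 0)))" for i
  have dir_ne_0: "(1, 0) \<noteq> (0 :: real \<times> real)" by (simp add: zero_prod_def)
  have "hamel_schedule r (fst \<circ> s) Z P"
  proof
    show "surj (fst \<circ> s)"
    proof (rule surjI)
      show "(fst \<circ> s) (inv s (x, undefined)) = x" for x using s by (simp add: surj_f_inv_f)
    qed
    show "line_null (Z i)" for i
    proof -
      obtain p v S where eq: "fst (snd (s i)) = ((p, v), S)" by (metis prod.exhaust)
      have "line_null (line_param p v ` G S)" if "v \<noteq> 0"
        using that G(1) unfolding line_null_def by blast
      then show ?thesis using line_null_empty by (simp add: Z_def eq)
    qed
    show "line_positive (P i)" for i
    proof -
      obtain p v S where eq: "fst (snd (snd (s i))) = ((p, v), S)" by (metis prod.exhaust)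
      have "line_positive (line_param p v ` C S)" if "v \<noteq> 0" "\<not> negligible (C S)"
        using that unfolding line_positive_def by blast
      then show ?thesis using line_positive_range_line_param[OF dir_ne_0] by (simp add: P_def eq)
    qed
  next
    fix p v :: "real \<times> real" and N :: "real set"
    assume "v \<noteq> 0" "negligible N"
    then obtain S where S: "N \<subseteq> G S" using G(2) by blast
    obtain i where i: "(0, ((p, v), S), ((0, 0), {}), 0) = s i" using surjD[OF s] by blast
    have "Z i = line_param p v ` G S" using \<open>v \<noteq> 0\<close> by (simp add: Z_def i[symmetric])
    then show "\<exists>i. line_param p v ` N \<subseteq> Z i" using S by blast
  next
    fix p v :: "real \<times> real" and K :: "real set"
    assume pvK: "v \<noteq> 0" "closed K" "\<not> negligible K"
    then have "K \<in> range C" using C by simp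
    then obtain S where S: "K = C S" by blast
    define task :: "real \<Rightarrow> (real \<times> real) \<times> coded_line_set \<times> coded_line_set \<times> real"
      where "task t = (0, ((0, 0), {}), ((p, v), S), t)" for t
    have "inj task" by (rule injI) (simp add: task_def)
    then have "uncountable (range task)"
      using countable_image_inj_on uncountable_UNIV_real by blast
    then have "uncountable (s -` range task)" by (rule uncountable_vimage_surj[OF s])
    moreover have "s -` range task \<subseteq> {i. P i = line_param p v ` K}"
      using pvK S by (auto simp: P_def task_def)
    ultimately show "uncountable {i. P i = line_param p v ` K}" by (metis countable_subset)
  qed (use r in auto)
  then show thesis by (rule that)
qed

theorem mainTheorem11:
  assumes "CH"
  shows "\<exists>A :: (real \<times> real) set. hamel_basis_R2 A \<and>
           (\<forall>l T. is_line l \<longrightarrow> isometry_onto T l \<longrightarrow>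
              strong_sierpinski_set (T -` (A \<inter> l)))"
proof -
  obtain r :: "real rel" and pt Z P where "hamel_schedule r pt Z P"
    by (rule hamel_schedule_exists[OF assms])
  then interpret hamel_schedule r pt Z P .
  have "strong_sierpinski_set (T -` (basis \<inter> l))" if "is_line l" "isometry_onto T l" for l T
    using countable_basis_Int_line uncountable_basis_Int_line[OF _ compact_imp_closed]
    by (rule strong_sierpinski_line_preimage[OF assms that])
  then show ?thesis using hamel_basis_R2_basis by blast
qed


end
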